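(* Let $n>2k-t$, $q\geq 3$ and $k>2t+1$. Then \[\theta_{k}-\theta_{k-t}+\left[{n-t\atop k-t}\right]_q-q^{(k-t+1)(k-t)}\left[{n-k-1\atop k-t}\right]_q>\left[{n-t-2\atop k-t-2}\right]_q\left(1+\theta_{t+1}q^{k-t-1}\frac{q^{n-k}-1}{q^{k-t-1}-1}\right).\]
   Context: $\left[{n\atop k}\right]_q=\frac{(q^n-1)\cdots(q^{n-k+1}-1)}{(q^k-1)\cdots(q-1)}$ for $k>0$, $=1$ for $k=0$; $\theta_m=\frac{q^{m+1}-1}{q-1}$; $q$ is a prime power. (In the paper these are the sizes of the two affine constructions: the left side is the size of a maximal $t$-intersecting family of affine $k$-spaces built from an affine $t$-space $\delta$ and an affine $k$-space $\pi$ meeting it in a $(t-1)$-space; the right side is that of the family of affine $k$-spaces meeting a fixed affine $(t+2)$-space in a prescribed set of $(t+1)$-spaces.) *)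

theory Defs
  imports Complex_Main "HOL-Computational_Algebra.Primes"
begin

definition gauss_binom :: "real \<Rightarrow> nat \<Rightarrow> nat \<Rightarrow> real" where
  "gauss_binom q n k = (\<Prod>i<k. (q ^ (n - i) - 1) / (q ^ (i + 1) - 1))"

definition theta :: "real \<Rightarrow> nat \<Rightarrow> real" where
  "theta q m = (q ^ (m + 1) - 1) / (q - 1)"

definition prime_power :: "nat \<Rightarrow> bool" where
  "prime_power q \<longleftrightarrow> (\<exists>p e. prime p \<and> e \<ge> 1 \<and> q = p ^ e)"

end

(*
  Write b = k - t - 1 and M = n - k - 1, so M \<ge> b + 1. Iterating q-Pascal,
  [M+b+2, b+1] - q^((b+1)(b+2)) [M, b+1] is a sum of nonnegative terms, among them
  [M+b+1, b] = [M+b, b-1] + q^b [M+b, b] and q^((b+1)^2) [M, b]. The right-hand side equals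
  [M+b, b-1] + \<theta>_(t+1) q^b [M+b, b], so it suffices that
  \<theta>_(t+1) q^b [M+b, b] \<le> q^((b+1)^2) [M, b]. This follows from \<theta>_(t+1) \<le> q^(b+1)/2
  and [M+b, b] \<le> 2 q^(b^2) [M, b]; the latter holds because [M+b, b]/[M, b] is at most q^(b^2)
  times a product of factors 1 + 1/(q^j - 1) over distinct j \<ge> 2, which stays below 2 when q \<ge> 3.
*)
theory Submission
  imports Defs
begin

lemma gauss_binom_Suc_right:
  "gauss_binom x n (Suc k) = gauss_binom x n k * (x ^ (n - k) - 1) / (x ^ Suc k - 1)"
  by (simp add: gauss_binom_def)

lemma gauss_binom_eq_0: "n < k \<Longrightarrow> gauss_binom x n k = 0"
  unfolding gauss_binom_def by (rule prod_zero) (auto intro!: bexI[of _ n])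

lemma gauss_binom_nonneg: "1 \<le> x \<Longrightarrow> 0 \<le> gauss_binom x n k"
  unfolding gauss_binom_def by (intro prod_nonneg divide_nonneg_nonneg) (simp_all add: one_le_power del: power_Suc)

lemma gauss_binom_pos: "1 < x \<Longrightarrow> k \<le> n \<Longrightarrow> 0 < gauss_binom x n k"
  unfolding gauss_binom_def by (intro prod_pos divide_pos_pos) (simp_all add: one_less_power del: power_Suc)

lemma gauss_binom_Suc_Suc:
  "gauss_binom x (Suc n) (Suc k) = gauss_binom x n k * (x ^ Suc n - 1) / (x ^ Suc k - 1)"
proof (induction k)
  case 0
  then show ?case by (simp add: gauss_binom_def)
next
  case (Suc k)
  then show ?case
    by (simp only: gauss_binom_Suc_right[of x "Suc n"] gauss_binom_Suc_right[of x n]) (simp add: ac_simps)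
qed

lemma gauss_binom_pascal:
  assumes "1 < x"
  shows "gauss_binom x (Suc n) (Suc k) = gauss_binom x n k + x ^ Suc k * gauss_binom x n (Suc k)"
proof (cases "k \<le> n")
  case True
  have "x ^ k * x ^ (n - k) = x ^ n"
    using True by (simp flip: power_add)
  moreover have "1 < x ^ Suc k"
    using assms by (intro one_less_power) auto
  ultimately show ?thesis
    unfolding gauss_binom_Suc_Suc gauss_binom_Suc_right[of x n k] by (simp add: field_simps)
next
  case False
  then show ?thesis
    by (simp add: gauss_binom_Suc_Suc gauss_binom_eq_0)
qed

lemma gauss_binom_pascal_iter:
  assumes "1 < x"
  shows "gauss_binom x (N + r) (Suc c)
    = (\<Sum>i<r. x ^ (Suc c * i) * gauss_binom x (N + r - Suc i) c) + x ^ (Suc c * r) * gauss_binom x N (Suc c)"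
proof (induction r)
  case 0
  then show ?case by simp
next
  case (Suc r)
  have "gauss_binom x (N + Suc r) (Suc c) = gauss_binom x (N + r) c + x ^ Suc c * gauss_binom x (N + r) (Suc c)"
    using gauss_binom_pascal[OF assms] by simp
  then show ?case
    unfolding Suc.IH sum.lessThan_Suc_shift by (simp add: sum_distrib_left power_add algebra_simps)
qed

lemma gauss_binom_pascal_iter_ge:
  assumes "1 < x" "0 < r"
  shows "gauss_binom x (N + r) c + x ^ (Suc c * r) * gauss_binom x N c
    \<le> gauss_binom x (N + Suc r) (Suc c) - x ^ (Suc c * Suc r) * gauss_binom x N (Suc c)"
proof -
  define f where "f i = x ^ (Suc c * i) * gauss_binom x (N + Suc r - Suc i) c" for i
  have "f 0 + f r = sum f {0, r}"
    using assms(2) by simp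
  also have "\<dots> \<le> sum f {..<Suc r}"
    using assms unfolding f_def by (intro sum_mono2) (auto intro!: mult_nonneg_nonneg gauss_binom_nonneg)
  finally show ?thesis
    using gauss_binom_pascal_iter[OF assms(1), of N "Suc r" c] unfolding f_def by simp
qed

(* The induction step of gauss_binom_shifted_ratio, with Y = x^(M-b) and Z = x^(2b+1). *)
lemma shifted_ratio_step:
  fixes g h p x Y Z :: real
  assumes IH: "g * (x * Y - 2) \<le> p * (x * Y) * h"
    and "2 \<le> x" "2 < Y" "0 \<le> g" "0 \<le> h" "0 \<le> p" "0 \<le> Z"
  shows "g * (Z * Y - 1) * (Y - 2) \<le> p * Z * Y * h * (Y - 1)"
proof -
  have "2 * Y \<le> x * Y"
    using assms(2,3) by (intro mult_right_mono) auto
  then have xY: "0 < x * Y - 2"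
    using assms(3) by linarith
  have "(x * Y - 2) * (Y - 1) - x * Y * (Y - 2) = x * Y - 2 * Y + 2"
    by (simp add: algebra_simps)
  then have "x * Y * (Y - 2) \<le> (x * Y - 2) * (Y - 1)"
    using \<open>2 * Y \<le> x * Y\<close> by linarith
  have "(x * Y - 2) * (g * (Y - 2)) = g * (x * Y - 2) * (Y - 2)"
    by simp
  also have "\<dots> \<le> p * (x * Y) * h * (Y - 2)"
    using IH assms(3) by (intro mult_right_mono) auto
  also have "\<dots> = p * h * (x * Y * (Y - 2))"
    by simp
  also have "\<dots> \<le> p * h * ((x * Y - 2) * (Y - 1))"
    using \<open>x * Y * (Y - 2) \<le> (x * Y - 2) * (Y - 1)\<close> assms(5,6) by (intro mult_left_mono) auto
  also have "\<dots> = (x * Y - 2) * (p * h * (Y - 1))"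
    by simp
  finally have "g * (Y - 2) \<le> p * h * (Y - 1)"
    using xY by simp
  then have "Z * Y * (g * (Y - 2)) \<le> Z * Y * (p * h * (Y - 1))"
    using assms(3,7) by (intro mult_left_mono) auto
  moreover have "g * (Z * Y - 1) * (Y - 2) = Z * Y * (g * (Y - 2)) - g * (Y - 2)"
    by (simp add: algebra_simps)
  moreover have "0 \<le> g * (Y - 2)"
    using assms(3,4) by simp
  ultimately show ?thesis
    by (simp add: algebra_simps)
qed

(* The bound [M+b, b] \<le> 2 x^(b^2) [M, b] is not inductive by itself; the factor
   L/(L - 2) with L = x^(M+1-b) is what makes the induction on b go through. *)
lemma gauss_binom_shifted_ratio:
  fixes x :: real
  assumes "3 \<le> x" "b + 1 \<le> M"
  shows "gauss_binom x (M + b) b * (x ^ (M + 1 - b) - 2) \<le> x ^ (b * b) * x ^ (M + 1 - b) * gauss_binom x M b"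
  using assms(2)
proof (induction b)
  case 0
  then show ?case by (simp add: gauss_binom_def)
next
  case (Suc b)
  define Y where "Y = x ^ (M - b)"
  define Z where "Z = x ^ (2 * b + 1)"
  define d where "d = x ^ Suc b - 1"
  have "x ^ 2 \<le> Y"
    unfolding Y_def using Suc.prems assms(1) by (intro power_increasing) auto
  moreover have "3 ^ 2 \<le> x ^ 2"
    using assms(1) by (intro power_mono) auto
  ultimately have "2 < Y" by simp
  have "0 < d"
    unfolding d_def using assms(1) by (simp add: one_less_power del: power_Suc)
  have "M + 1 - b = Suc (M - b)" and "Suc (M + b) = (2 * b + 1) + (M - b)"
    using Suc.prems by simp_all
  then have IH: "gauss_binom x (M + b) b * (x * Y - 2) \<le> x ^ (b * b) * (x * Y) * gauss_binom x M b"
    and "x ^ Suc (M + b) = Z * Y"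
    using Suc.IH Suc.prems unfolding Y_def Z_def by (simp_all only: power_add power_Suc)
  have "Suc b * Suc b = b * b + (2 * b + 1)"
    by simp
  then have "x ^ (Suc b * Suc b) = x ^ (b * b) * Z"
    unfolding Z_def by (simp only: power_add)
  moreover have "gauss_binom x (M + Suc b) (Suc b) * (x ^ (M + 1 - Suc b) - 2)
      = gauss_binom x (M + b) b * (Z * Y - 1) * (Y - 2) / d"
    using gauss_binom_Suc_Suc[of x "M + b" b] \<open>x ^ Suc (M + b) = Z * Y\<close>
    unfolding Y_def d_def by simp
  moreover have "gauss_binom x M (Suc b) = gauss_binom x M b * (Y - 1) / d"
    unfolding Y_def d_def by (simp add: gauss_binom_Suc_right)
  moreover have "gauss_binom x (M + b) b * (Z * Y - 1) * (Y - 2) \<le> x ^ (b * b) * Z * Y * gauss_binom x M b * (Y - 1)"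
    using assms(1) \<open>2 < Y\<close> unfolding Z_def
    by (intro shifted_ratio_step[OF IH]) (auto intro: gauss_binom_nonneg)
  ultimately show ?case
    using \<open>0 < d\<close> unfolding Y_def by (simp add: divide_right_mono)
qed

lemma gauss_binom_shifted_le:
  fixes x :: real
  assumes "3 \<le> x" "b + 1 \<le> M"
  shows "gauss_binom x (M + b) b \<le> 2 * x ^ (b * b) * gauss_binom x M b"
proof -
  define L where "L = x ^ (M + 1 - b)"
  have "x ^ 2 \<le> L"
    unfolding L_def using assms by (intro power_increasing) auto
  moreover have "3 ^ 2 \<le> x ^ 2"
    using assms(1) by (intro power_mono) auto
  ultimately have "4 \<le> L" by simp
  have "gauss_binom x (M + b) b * L \<le> 2 * (gauss_binom x (M + b) b * (L - 2))"
    using mult_right_mono[OF \<open>4 \<le> L\<close> gauss_binom_nonneg, of x "M + b" b] assms(1)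
    by (simp add: algebra_simps)
  also have "\<dots> \<le> 2 * (x ^ (b * b) * L * gauss_binom x M b)"
    using gauss_binom_shifted_ratio[OF assms] unfolding L_def by simp
  finally have "L * gauss_binom x (M + b) b \<le> L * (2 * x ^ (b * b) * gauss_binom x M b)"
    by (simp add: ac_simps)
  then show ?thesis
    using \<open>4 \<le> L\<close> by simp
qed

lemma theta_nonneg: "1 < x \<Longrightarrow> 0 \<le> theta x m"
  unfolding theta_def by (simp add: one_le_power del: power_Suc)

lemma theta_mono: "1 < x \<Longrightarrow> m \<le> m' \<Longrightarrow> theta x m \<le> theta x m'"
  unfolding theta_def by (intro divide_right_mono diff_right_mono power_increasing) auto

lemma theta_le_half_power:
  assumes "3 \<le> x"
  shows "theta x m \<le> x ^ (m + 1) / 2"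
proof -
  have "x ^ (m + 1) * 2 \<le> x ^ (m + 1) * (x - 1)"
    using assms by (intro mult_left_mono) auto
  then have "x ^ (m + 1) - 1 \<le> x ^ (m + 1) / 2 * (x - 1)"
    by simp
  then show ?thesis
    unfolding theta_def using assms by (simp add: pos_divide_le_eq del: power_Suc)
qed

lemma theta_gauss_binom_shifted_le:
  fixes x :: real
  assumes "3 \<le> x" "m \<le> b" "b + 1 \<le> M"
  shows "theta x m * x ^ b * gauss_binom x (M + b) b \<le> x ^ (Suc b * Suc b) * gauss_binom x M b"
proof -
  have "theta x m \<le> x ^ (b + 1) / 2"
    using theta_mono[of x m b] theta_le_half_power[OF assms(1), of b] assms(1,2) by simp
  then have "theta x m * x ^ b * gauss_binom x (M + b) b
      \<le> x ^ (b + 1) / 2 * x ^ b * (2 * x ^ (b * b) * gauss_binom x M b)"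
    using theta_nonneg[of x m] gauss_binom_shifted_le[OF assms(1,3)] gauss_binom_nonneg[of x] assms(1)
    by (intro mult_mono) auto
  also have "\<dots> = x ^ (Suc b * Suc b) * gauss_binom x M b"
    by (simp add: power_add algebra_simps)
  finally show ?thesis .
qed

theorem mainTheorem18:
  fixes q n k t :: nat
  assumes "prime_power q"
    and "n > 2 * k - t"
    and "q \<ge> 3"
    and "k > 2 * t + 1"
  shows "theta (real q) k - theta (real q) (k - t) + gauss_binom (real q) (n - t) (k - t)
           - real q ^ ((k - t + 1) * (k - t)) * gauss_binom (real q) (n - k - 1) (k - t)
         > gauss_binom (real q) (n - t - 2) (k - t - 2)
           * (1 + theta (real q) (t + 1) * real q ^ (k - t - 1)
                * ((real q ^ (n - k) - 1) / (real q ^ (k - t - 1) - 1)))"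
proof -
  define x where "x = real q"
  define c where "c = k - t - 2"
  define b where "b = Suc c"
  define M where "M = n - k - 1"
  have x: "3 \<le> x" "1 < x"
    using assms(3) unfolding x_def by simp_all
  have idx: "k - t = Suc b" "k - t - 1 = b" "n - t = M + Suc (Suc b)" "n - t - 2 = M + b"
      "n - k = M + b - c" "t + 1 \<le> b" "b + 1 \<le> M"
    using assms(2,4) unfolding b_def c_def M_def by auto
  define g0 where "g0 = gauss_binom x (M + b) c"
  define g1 where "g1 = gauss_binom x (M + b) b"
  have "gauss_binom x (M + Suc b) b + x ^ (Suc b * Suc b) * gauss_binom x M b
      \<le> gauss_binom x (n - t) (k - t) - x ^ ((k - t + 1) * (k - t)) * gauss_binom x (n - k - 1) (k - t)"
    using gauss_binom_pascal_iter_ge[OF x(2), of "Suc b" M b]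
    unfolding idx(1,3) M_def[symmetric] by (simp add: mult.commute)
  moreover have "gauss_binom x (M + Suc b) b = g0 + x ^ b * g1"
    using gauss_binom_pascal[OF x(2), of "M + b" c] unfolding g0_def g1_def b_def by simp
  moreover have "g0 * (1 + theta x (t + 1) * x ^ b * ((x ^ (n - k) - 1) / (x ^ b - 1)))
      = g0 + theta x (t + 1) * x ^ b * g1"
    unfolding g0_def g1_def b_def idx(5) by (simp add: gauss_binom_Suc_right algebra_simps)
  moreover have "theta x (t + 1) * x ^ b * g1 \<le> x ^ (Suc b * Suc b) * gauss_binom x M b"
    unfolding g1_def using x(1) idx(6,7) by (rule theta_gauss_binom_shifted_le)
  moreover have "0 < x ^ b * g1"
    unfolding g1_def using x gauss_binom_pos[OF x(2)] by simp
  moreover have "theta x (k - t) \<le> theta x k"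
    using theta_mono[OF x(2)] by simp
  ultimately show ?thesis
    unfolding x_def[symmetric] idx(2,4) c_def[symmetric] g0_def[symmetric] by linarith
qed

end
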